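(* Let $d\ge 1$, let $|\cdot|$ be any norm on $\mathbb{R}^d$, let $p\in(0,+\infty)$ and let $X$ be an $\mathbb{R}^d$-valued random vector with $\mathbb{E}|X|^p<+\infty$ and distribution $\mu$. For a subset $\Gamma\subset\mathbb{R}^d$ and $r>0$ put $e_r(\Gamma,X)=\big(\mathbb{E}\, d(X,\Gamma)^r\big)^{1/r}$, where $d(\xi,\Gamma)=\inf_{a\in\Gamma}|\xi-a|$ (with $d(\xi,\emptyset)=+\infty$). For a sequence $(a_N)_{N\ge1}$ write $a^{(N)}=\{a_1,\dots,a_N\}$ and $a^{(0)}=\emptyset$. (a) (Existence) There exists at least one sequence $(a_N)_{N\ge 1}$ of points of $\mathbb{R}^d$ such that for every $N\ge 0$, $$a_{N+1}\in\operatorname{argmin}_{\xi\in\mathbb{R}^d} e_p\big(a^{(N)}\cup\{\xi\},X\big)$$ (such a sequence is called an $L^p$-optimal greedy quantization sequence); in particular $a_1$ minimizes $\xi\mapsto\mathbb{E}|X-\xi|^p$ (an $L^p$-median of $\mu$). Moreover, for any such sequence and any integer $N\le \operatorname{card}(\operatorname{supp}(\mu))$, the finite sequence $\big(e_p(a^{(n)},X)\big)_{1\le n\le N}$ is strictly decreasing; in particular $a_n\notin a^{(n-1)}$ for $n\in\{1,\dots,N\}$. (b) (Local optimality) Let $(a_N)_{N\ge1}$ be an $L^p$-optimal greedy quantization sequence and let $N\le\operatorname{card}(\operatorname{supp}(\mu))$. Set $$C_{a_N}(a^{(N)})=\Big\{\xi\in\mathbb{R}^d:\ |\xi-a_N|<\min_{1\le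 i\le N-1}|\xi-a_i|\Big\},\qquad W_{a_N}(a^{(N)})=\Big\{\xi\in\mathbb{R}^d:\ |\xi-a_N|\le\min_{1\le i\le N-1}|\xi-a_i|\Big\}$$ (with the minimum over an empty index set equal to $+\infty$). Then $\mu\big(C_{a_N}(a^{(N)})\big)>0$, and for every Borel set $C$ with $C_{a_N}(a^{(N)})\subset C\subset W_{a_N}(a^{(N)})$, $$a_N\in\operatorname{argmin}_{a\in\mathbb{R}^d}\mathbb{E}\big(|X-a|^p\,\big|\,X\in C\big).$$ (c) (Space filling) Assume moreover $\mathbb{E}|X|^q<+\infty$ for some $q\ge p$. Then every $L^p$-optimal greedy quantization sequence $(a_N)_{N\ge1}$ satisfies $\lim_{N\to+\infty}e_q(a^{(N)},X)=0$, i.e. $\lim_{N\to+\infty}\int_{\mathbb{R}^d}\min_{1\le i\le N}|\xi-a_i|^q\,\mu(d\xi)=0$. In particular $\lim_N e_p(a^{(N)},X)=0$.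
   Context: $\operatorname{supp}(\mu)$ denotes the (topological) support of the distribution $\mu$ and $\operatorname{card}$ its cardinality (possibly infinite). *)

theory Defs
  imports "HOL-Analysis.Analysis" "HOL-Probability.Probability"
begin

text \<open>An arbitrary norm on the Euclidean space 'a (a copy of R^d, d = DIM('a) >= 1).\<close>
definition is_norm :: "('a::euclidean_space \<Rightarrow> real) \<Rightarrow> bool" where
  "is_norm nrm \<longleftrightarrow>
     (\<forall>x. 0 \<le> nrm x) \<and> (\<forall>x. nrm x = 0 \<longleftrightarrow> x = 0) \<and>
     (\<forall>c x. nrm (c *\<^sub>R x) = \<bar>c\<bar> * nrm x) \<and>
     (\<forall>x y. nrm (x + y) \<le> nrm x + nrm y)"

definition enn_powr :: "ennreal \<Rightarrow> real \<Rightarrow> ennreal" where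
  "enn_powr x r = (if x = \<infinity> then \<infinity> else ennreal (enn2real x powr r))"

definition dist_set :: "('a::euclidean_space \<Rightarrow> real) \<Rightarrow> 'a \<Rightarrow> 'a set \<Rightarrow> ennreal" where
  "dist_set nrm \<xi> \<Gamma> = (INF a\<in>\<Gamma>. ennreal (nrm (\<xi> - a)))"

definition quant_err :: "('a::euclidean_space \<Rightarrow> real) \<Rightarrow> 'a measure \<Rightarrow> real \<Rightarrow> 'a set \<Rightarrow> ennreal" where
  "quant_err nrm \<mu> r \<Gamma> = enn_powr (\<integral>\<^sup>+ \<xi>. enn_powr (dist_set nrm \<xi> \<Gamma>) r \<partial>\<mu>) (1 / r)"

text \<open>a^(N) = {a_1, ..., a_N}; a^(0) is empty (index 0 of the sequence is unused).\<close>
definition first_pts :: "(nat \<Rightarrow> 'a) \<Rightarrow> nat \<Rightarrow> 'a set" where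
  "first_pts a N = a ` {1..N}"

definition greedy_seq :: "('a::euclidean_space \<Rightarrow> real) \<Rightarrow> 'a measure \<Rightarrow> real \<Rightarrow> (nat \<Rightarrow> 'a) \<Rightarrow> bool" where
  "greedy_seq nrm \<mu> p a \<longleftrightarrow>
     (\<forall>N. \<forall>\<xi>. quant_err nrm \<mu> p (first_pts a N \<union> {a (Suc N)})
                \<le> quant_err nrm \<mu> p (first_pts a N \<union> {\<xi>}))"

definition support :: "'a::topological_space measure \<Rightarrow> 'a set" where
  "support \<mu> = {x. \<forall>U. open U \<longrightarrow> x \<in> U \<longrightarrow> emeasure \<mu> U > 0}"

text \<open>N <= card(S), where card may be infinite.\<close>
definition le_card :: "nat \<Rightarrow> 'a set \<Rightarrow> bool" where
  "le_card N S \<longleftrightarrow> (finite S \<longrightarrow> N \<le> card S)"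

definition open_cell :: "('a::euclidean_space \<Rightarrow> real) \<Rightarrow> (nat \<Rightarrow> 'a) \<Rightarrow> nat \<Rightarrow> 'a set" where
  "open_cell nrm a N = {\<xi>. \<forall>i\<in>{1..<N}. nrm (\<xi> - a N) < nrm (\<xi> - a i)}"

definition closed_cell :: "('a::euclidean_space \<Rightarrow> real) \<Rightarrow> (nat \<Rightarrow> 'a) \<Rightarrow> nat \<Rightarrow> 'a set" where
  "closed_cell nrm a N = {\<xi>. \<forall>i\<in>{1..<N}. nrm (\<xi> - a N) \<le> nrm (\<xi> - a i)}"

definition cond_exp_set :: "'a measure \<Rightarrow> ('a \<Rightarrow> ennreal) \<Rightarrow> 'a set \<Rightarrow> ennreal" where
  "cond_exp_set \<mu> f C = (\<integral>\<^sup>+ x\<in>C. f x \<partial>\<mu>) / emeasure \<mu> C"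

end

theory Submission imports Defs begin

text \<open>
  Adding to a finite set G a point x0 of the support of \<mu> at distance at least \<delta> from G lowers
  the L^p-distortion by at least ((3\<delta>/4)^p - (\<delta>/4)^p) \<mu>(B(x0, \<delta>/4)), a bound that does not
  depend on G. Hence the greedy errors decrease strictly as long as a^(N) does not exhaust the
  support, the open cell of a new point carries positive mass (otherwise dropping the point would
  not change the distortion), and the greedy points come arbitrarily close to every support point,
  because the finite nonincreasing distortions cannot absorb infinitely many such gains. Then
  d(x, a^(N)) tends to 0 on the support, and the L^q-distortion tends to 0 by monotone convergence.
  Each greedy step exists since \<xi> \<mapsto> e_p(a^(N) \<union> {\<xi>}) is lower semicontinuous (Fatou) and
  tends to at least e_p(a^(N)) as |\<xi>| \<rightarrow> \<infinity>. Local optimality in a cell holds because the new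
  point only changes the distortion inside its cell.
\<close>

section \<open>Powers in [0, \<infinity>]\<close>

lemma powr_add_le_two_powr:
  fixes u v r :: real
  assumes "0 \<le> u" "0 \<le> v" "0 < r"
  shows "(u + v) powr r \<le> 2 powr r * (u powr r + v powr r)"
proof -
  have "(u + v) powr r \<le> (2 * max u v) powr r" using assms by (intro powr_mono2) auto
  also have "\<dots> = 2 powr r * max u v powr r" using assms by (simp add: powr_mult)
  also have "max u v powr r \<le> u powr r + v powr r" by (cases "u \<le> v") (auto simp: max_def)
  finally show ?thesis by simp
qed

lemma enn_powr_mono: "0 \<le> r \<Longrightarrow> x \<le> y \<Longrightarrow> enn_powr x r \<le> enn_powr y r"
  unfolding enn_powr_def
  by (cases x; cases y) (auto intro!: powr_mono2 ennreal_leI simp: top_unique)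

lemma enn_powr_strict_mono: "0 < r \<Longrightarrow> x < y \<Longrightarrow> enn_powr x r < enn_powr y r"
  unfolding enn_powr_def
  by (cases x; cases y) (auto intro!: powr_less_mono2 simp: ennreal_less_iff)

lemma enn_powr_le_iff: "0 < r \<Longrightarrow> enn_powr x r \<le> enn_powr y r \<longleftrightarrow> x \<le> y"
  using enn_powr_mono[of r x y] enn_powr_strict_mono[of r y x] by (meson less_imp_le not_le)

lemma enn_powr_less_iff: "0 < r \<Longrightarrow> enn_powr x r < enn_powr y r \<longleftrightarrow> x < y"
  using enn_powr_le_iff[of r y x] by (meson not_le)

lemma enn_powr_tendsto_0:
  assumes r: "0 < r" and f: "(f \<longlongrightarrow> 0) F"
  shows "((\<lambda>n. enn_powr (f n) r) \<longlongrightarrow> 0) F"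
proof -
  have "((\<lambda>n. ennreal (enn2real (f n) powr r)) \<longlongrightarrow> ennreal 0) F"
    using r f by (intro tendsto_ennrealI tendsto_zero_powrI tendsto_enn2real[of _ 0]) auto
  moreover have "\<forall>\<^sub>F n in F. f n < top"
    using f by (rule order_tendstoD) simp
  hence "\<forall>\<^sub>F n in F. ennreal (enn2real (f n) powr r) = enn_powr (f n) r"
    by eventually_elim (simp add: enn_powr_def)
  ultimately show ?thesis by (simp add: tendsto_cong)
qed

lemma filterlim_powr_at_top:
  fixes f :: "'a \<Rightarrow> real"
  assumes "0 < r" "filterlim f at_top F"
  shows "filterlim (\<lambda>x. f x powr r) at_top F"
  unfolding filterlim_at_top
proof
  fix Z :: real
  have "\<forall>\<^sub>F x in F. max Z 1 powr (1 / r) \<le> f x"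
    using assms(2) by (simp add: filterlim_at_top)
  thus "\<forall>\<^sub>F x in F. Z \<le> f x powr r"
  proof eventually_elim
    case (elim x)
    have "Z \<le> (max Z 1 powr (1 / r)) powr r" using assms(1) by (simp add: powr_powr)
    also have "\<dots> \<le> f x powr r" using elim assms(1) by (intro powr_mono2) auto
    finally show ?case .
  qed
qed

lemma first_pts_0 [simp]: "first_pts a 0 = {}"
  by (simp add: first_pts_def)

lemma first_pts_Suc: "first_pts a (Suc N) = insert (a (Suc N)) (first_pts a N)"
  by (auto simp: first_pts_def atLeastAtMostSuc_conv)

lemma first_pts_pred: "1 \<le> N \<Longrightarrow> first_pts a N = insert (a N) (first_pts a (N - 1))"
  using first_pts_Suc[of a "N - 1"] by simp

lemma finite_first_pts [simp]: "finite (first_pts a N)"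
  by (simp add: first_pts_def)

lemma card_first_pts_le: "card (first_pts a N) \<le> N"
  using card_image_le[of "{1..N}" a] by (simp add: first_pts_def)

lemma first_pts_mono: "n \<le> m \<Longrightarrow> first_pts a n \<subseteq> first_pts a m"
  by (auto simp: first_pts_def)

lemma first_pts_pred_eq: "first_pts a (N - 1) = a ` {1..<N}"
  by (cases N) (auto simp: first_pts_def atLeastLessThanSuc_atLeastAtMost)

section \<open>Norms on Euclidean space\<close>

locale norm_function =
  fixes nrm :: "'a::euclidean_space \<Rightarrow> real"
  assumes is_norm: "is_norm nrm"
begin

lemma nonneg: "0 \<le> nrm x"
  using is_norm by (simp add: is_norm_def)

lemma eq_0_iff: "nrm x = 0 \<longleftrightarrow> x = 0"
  using is_norm by (simp add: is_norm_def)

lemma zero [simp]: "nrm 0 = 0"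
  using eq_0_iff by simp

lemma scaleR: "nrm (c *\<^sub>R x) = \<bar>c\<bar> * nrm x"
  using is_norm by (simp add: is_norm_def)

lemma triangle: "nrm (x + y) \<le> nrm x + nrm y"
  using is_norm by (simp add: is_norm_def)

lemma minus: "nrm (- x) = nrm x"
  using scaleR[of "-1" x] by simp

lemma minus_commute: "nrm (x - y) = nrm (y - x)"
  using minus[of "x - y"] by simp

lemma pos: "x \<noteq> 0 \<Longrightarrow> 0 < nrm x"
  using nonneg[of x] eq_0_iff[of x] by linarith

lemma triangle_diff: "nrm (x - z) \<le> nrm (x - y) + nrm (y - z)"
  using triangle[of "x - y" "y - z"] by simp

lemma reverse_triangle: "\<bar>nrm x - nrm y\<bar> \<le> nrm (x - y)"
  using triangle[of "x - y" y] triangle[of "y - x" x] minus_commute[of x y] by simp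

lemma le_sum_Basis: "nrm x \<le> (\<Sum>b\<in>Basis. nrm b) * norm x"
proof -
  have "nrm x = nrm (\<Sum>b\<in>Basis. (x \<bullet> b) *\<^sub>R b)"
    by (simp add: euclidean_representation)
  also have "\<dots> \<le> (\<Sum>b\<in>Basis. nrm ((x \<bullet> b) *\<^sub>R b))"
    by (induction rule: finite_induct[OF finite_Basis]) (auto intro: order_trans[OF triangle])
  also have "\<dots> \<le> (\<Sum>b\<in>Basis. norm x * nrm b)"
    by (intro sum_mono) (simp add: scaleR Basis_le_norm mult_right_mono nonneg)
  finally show ?thesis
    by (simp add: sum_distrib_left mult.commute)
qed

lemma lipschitz: "lipschitz_on (\<Sum>b\<in>Basis. nrm b) UNIV nrm"
proof (rule lipschitz_onI)
  show "dist (nrm x) (nrm y) \<le> (\<Sum>b\<in>Basis. nrm b) * dist x y" for x y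
    using reverse_triangle[of x y] le_sum_Basis[of "x - y"] by (simp add: dist_norm dist_real_def)
qed (simp add: sum_nonneg nonneg)

lemma continuous_on_nrm [continuous_intros]:
  "continuous_on S f \<Longrightarrow> continuous_on S (\<lambda>x. nrm (f x))"
  by (rule continuous_on_compose2[OF lipschitz_on_continuous_on[OF lipschitz]]) auto

lemma tendsto_nrm [tendsto_intros]: "(f \<longlongrightarrow> l) F \<Longrightarrow> ((\<lambda>x. nrm (f x)) \<longlongrightarrow> nrm l) F"
  using lipschitz_on_continuous_on[OF lipschitz]
  by (rule continuous_on_tendsto_compose) auto

lemma borel_measurable_nrm [measurable]: "nrm \<in> borel_measurable borel"
  by (intro borel_measurable_continuous_onI continuous_on_nrm continuous_on_id)

lemma ge_norm: "\<exists>c>0. \<forall>x. c * norm x \<le> nrm x"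
proof -
  have "sphere (0::'a) 1 \<noteq> {}"
    using vector_choose_size[of 1] by auto
  then obtain x0 where x0: "x0 \<in> sphere 0 1" "\<forall>y\<in>sphere 0 1. nrm x0 \<le> nrm y"
    using continuous_attains_inf[OF compact_sphere] continuous_on_nrm[OF continuous_on_id] by blast
  have "nrm x0 * norm x \<le> nrm x" for x
  proof (cases "x = 0")
    case False
    hence "nrm x0 \<le> nrm ((1 / norm x) *\<^sub>R x)" using x0 by simp
    also have "\<dots> = nrm x / norm x" by (simp add: scaleR)
    finally show ?thesis using False by (simp add: field_simps)
  qed simp
  moreover have "0 < nrm x0" using x0 by (intro pos) auto
  ultimately show ?thesis by (auto simp: mult.commute)
qed

lemma compact_sublevel: "compact {x. nrm x \<le> R}"
proof -
  obtain c where c: "0 < c" "\<And>x. c * norm x \<le> nrm x" using ge_norm by blast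
  have "bounded {x. nrm x \<le> R}"
    unfolding bounded_iff
  proof (intro exI ballI)
    show "norm x \<le> R / c" if "x \<in> {x. nrm x \<le> R}" for x
      using that c(1) c(2)[of x] by (simp add: field_simps)
  qed
  moreover have "closed {x. nrm x \<le> R}"
    by (intro closed_Collect_le continuous_intros)
  ultimately show ?thesis by (simp add: compact_eq_bounded_closed)
qed

lemma avoid_finite_set: "finite G \<Longrightarrow> x \<notin> G \<Longrightarrow> \<exists>\<delta>>0. \<forall>g\<in>G. \<delta> \<le> nrm (x - g)"
proof -
  assume "finite G" "x \<notin> G"
  then obtain d where d: "0 < d" "\<forall>g\<in>G. d \<le> dist x g"
    using finite_set_avoid[of G x] by metis
  obtain c where c: "0 < c" "\<And>x. c * norm x \<le> nrm x" using ge_norm by blast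
  have "c * d \<le> nrm (x - g)" if "g \<in> G" for g
    using d(2) that c by (intro order_trans[OF _ c(2)]) (simp add: dist_norm)
  thus ?thesis using c(1) d(1) by (intro exI[of _ "c * d"]) simp
qed

definition dist_powr :: "real \<Rightarrow> 'a set \<Rightarrow> 'a \<Rightarrow> ennreal" where
  "dist_powr r G x = (INF g\<in>G. ennreal (nrm (x - g) powr r))"

lemma dist_powr_empty [simp]: "dist_powr r {} x = \<infinity>"
  by (simp add: dist_powr_def)

lemma dist_powr_insert: "dist_powr r (insert g G) x = min (ennreal (nrm (x - g) powr r)) (dist_powr r G x)"
  by (simp add: dist_powr_def inf_min)

lemma dist_powr_le: "g \<in> G \<Longrightarrow> dist_powr r G x \<le> ennreal (nrm (x - g) powr r)"
  unfolding dist_powr_def by (rule INF_lower)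

lemma dist_powr_ge: "(\<And>g. g \<in> G \<Longrightarrow> c \<le> nrm (x - g)) \<Longrightarrow> 0 \<le> c \<Longrightarrow> 0 \<le> r \<Longrightarrow> ennreal (c powr r) \<le> dist_powr r G x"
  unfolding dist_powr_def by (auto intro!: INF_greatest ennreal_leI powr_mono2)

lemma dist_powr_antimono: "G \<subseteq> H \<Longrightarrow> dist_powr r H x \<le> dist_powr r G x"
  unfolding dist_powr_def by (rule INF_superset_mono) auto

lemma borel_measurable_dist_powr [measurable]: "finite G \<Longrightarrow> dist_powr r G \<in> borel_measurable borel"
proof (induction G rule: finite_induct)
  case (insert g G)
  then show ?case
    by (simp add: dist_powr_insert[abs_def])
qed (simp add: dist_powr_def)

lemma enn_powr_dist_set:
  assumes "0 < r" "finite G"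
  shows "enn_powr (dist_set nrm x G) r = dist_powr r G x"
proof (cases "G = {}")
  case False
  then obtain g0 where g0: "g0 \<in> G" "\<And>g. g \<in> G \<Longrightarrow> nrm (x - g0) \<le> nrm (x - g)"
    using ex_min_if_finite[of "(\<lambda>g. nrm (x - g)) ` G"] assms(2)
    by (metis (mono_tags, lifting) arg_min_if_finite(1,2) not_less)
  have "dist_set nrm x G = ennreal (nrm (x - g0))"
    unfolding dist_set_def using g0
    by (intro antisym INF_lower2[OF g0(1)] INF_greatest ennreal_leI g0(2)) auto
  moreover have "dist_powr r G x = ennreal (nrm (x - g0) powr r)"
    using assms(1) by (intro antisym dist_powr_le g0 dist_powr_ge) (auto simp: nonneg)
  ultimately show ?thesis by (simp add: enn_powr_def nonneg)
qed (simp add: dist_set_def enn_powr_def)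

lemma dist_powr_insert_tendsto:
  assumes "0 < r" "\<xi> \<longlonglongrightarrow> l"
  shows "(\<lambda>k. dist_powr r (insert (\<xi> k) G) x) \<longlonglongrightarrow> dist_powr r (insert l G) x"
  unfolding dist_powr_insert using assms
  by (intro tendsto_min tendsto_ennrealI tendsto_powr' tendsto_intros) (auto simp: nonneg)

lemma dist_powr_insert_far_tendsto:
  assumes "0 < r" "filterlim (\<lambda>k. nrm (\<xi> k)) at_top sequentially"
  shows "(\<lambda>k. dist_powr r (insert (\<xi> k) G) x) \<longlonglongrightarrow> dist_powr r G x"
proof -
  have "filterlim (\<lambda>k. - nrm x + nrm (\<xi> k)) at_top sequentially"
    using assms(2) by (rule filterlim_tendsto_add_at_top[OF tendsto_const])
  hence "filterlim (\<lambda>k. nrm (x - \<xi> k)) at_top sequentially"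
    by (rule filterlim_at_top_mono)
      (use reverse_triangle minus_commute in \<open>auto simp: abs_le_iff algebra_simps\<close>)
  hence "(\<lambda>k. ennreal (nrm (x - \<xi> k) powr r)) \<longlonglongrightarrow> top"
    unfolding ennreal_tendsto_top_eq_at_top by (rule filterlim_powr_at_top[OF assms(1)])
  hence "(\<lambda>k. min (ennreal (nrm (x - \<xi> k) powr r)) (dist_powr r G x)) \<longlonglongrightarrow> min top (dist_powr r G x)"
    by (intro tendsto_min tendsto_const)
  thus ?thesis by (simp add: dist_powr_insert)
qed

lemma dist_powr_insert_near_le:
  assumes "0 < r" "\<forall>g\<in>G. \<delta> \<le> nrm (x0 - g)" "nrm (x - x0) < \<delta> / 4"
  shows "dist_powr r (insert x0 G) x + ennreal ((3 * \<delta> / 4) powr r - (\<delta> / 4) powr r) \<le> dist_powr r G x"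
proof -
  have \<delta>: "0 < \<delta>" using assms(3) nonneg[of "x - x0"] by linarith
  have "dist_powr r (insert x0 G) x \<le> ennreal (nrm (x - x0) powr r)"
    by (rule dist_powr_le) simp
  also have "\<dots> \<le> ennreal ((\<delta> / 4) powr r)"
    using assms by (intro ennreal_leI powr_mono2) (auto simp: nonneg)
  finally have "dist_powr r (insert x0 G) x + ennreal ((3 * \<delta> / 4) powr r - (\<delta> / 4) powr r)
      \<le> ennreal ((\<delta> / 4) powr r) + ennreal ((3 * \<delta> / 4) powr r - (\<delta> / 4) powr r)"
    by (rule add_right_mono)
  also have "\<dots> = ennreal ((3 * \<delta> / 4) powr r)"
    using \<delta> assms(1) by (subst ennreal_plus[symmetric]) (auto intro!: powr_mono2)
  also have "\<dots> \<le> dist_powr r G x"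
  proof (rule dist_powr_ge)
    show "3 * \<delta> / 4 \<le> nrm (x - g)" if "g \<in> G" for g
      using assms(2,3) that triangle_diff[of x0 g x] minus_commute[of x0 x] by fastforce
  qed (use \<delta> assms(1) in auto)
  finally show ?thesis .
qed

lemma dist_powr_first_pts: "dist_powr r (first_pts a N) x = (INF i\<in>{1..N}. ennreal (nrm (x - a i) powr r))"
  by (simp add: dist_powr_def first_pts_def image_image)

lemma dist_powr_first_pts_outside_open_cell:
  assumes "1 \<le> N" "x \<notin> open_cell nrm a N" "0 \<le> r"
  shows "dist_powr r (first_pts a N) x = dist_powr r (first_pts a (N - 1)) x"
proof -
  obtain i where i: "i \<in> {1..<N}" "nrm (x - a i) \<le> nrm (x - a N)"
    using assms(2) by (auto simp: open_cell_def not_less)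
  have "dist_powr r (first_pts a (N - 1)) x \<le> ennreal (nrm (x - a i) powr r)"
    unfolding first_pts_pred_eq using i(1) by (intro dist_powr_le) simp
  also have "\<dots> \<le> ennreal (nrm (x - a N) powr r)"
    using i(2) assms(3) by (intro ennreal_leI powr_mono2) (auto simp: nonneg)
  finally show ?thesis
    using assms(1) by (simp add: first_pts_pred dist_powr_insert min_absorb2)
qed

lemma dist_powr_first_pts_closed_cell:
  assumes "1 \<le> N" "x \<in> closed_cell nrm a N" "0 \<le> r"
  shows "dist_powr r (first_pts a N) x = ennreal (nrm (x - a N) powr r)"
proof -
  have "ennreal (nrm (x - a N) powr r) \<le> dist_powr r (first_pts a (N - 1)) x"
    using assms(2,3) unfolding first_pts_pred_eq
    by (intro dist_powr_ge) (auto simp: closed_cell_def nonneg)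
  thus ?thesis
    using assms(1) by (simp add: first_pts_pred dist_powr_insert min_absorb1)
qed

lemma open_open_cell: "open (open_cell nrm a N)"
proof -
  have "open_cell nrm a N = (\<Inter>i\<in>{1..<N}. {x. nrm (x - a N) < nrm (x - a i)})"
    by (auto simp: open_cell_def)
  also have "open \<dots>"
    by (intro open_INT ballI finite_atLeastLessThan open_Collect_less continuous_intros)
  finally show ?thesis .
qed

end

section \<open>Distortion\<close>

locale quantization = norm_function nrm for nrm :: "'a::euclidean_space \<Rightarrow> real" +
  fixes \<mu> :: "'a measure"
  assumes prob_space: "prob_space \<mu>" and sets_eq_borel [measurable_cong]: "sets \<mu> = sets borel"
begin

lemma space_eq_UNIV [simp]: "space \<mu> = UNIV"
  using sets_eq_imp_space_eq[OF sets_eq_borel] by simp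

lemma emeasure_UNIV: "emeasure \<mu> UNIV = 1"
  using prob_space.emeasure_space_1[OF prob_space] by simp

definition distortion :: "real \<Rightarrow> 'a set \<Rightarrow> ennreal" where
  "distortion r G = (\<integral>\<^sup>+ x. dist_powr r G x \<partial>\<mu>)"

lemma quant_err_eq_distortion:
  "0 < r \<Longrightarrow> finite G \<Longrightarrow> quant_err nrm \<mu> r G = enn_powr (distortion r G) (1 / r)"
  by (simp add: quant_err_def distortion_def enn_powr_dist_set)

lemma distortion_antimono: "G \<subseteq> H \<Longrightarrow> distortion r H \<le> distortion r G"
  unfolding distortion_def by (intro nn_integral_mono dist_powr_antimono)

lemma distortion_empty [simp]: "distortion r {} = \<infinity>"
  using emeasure_UNIV by (simp add: distortion_def)

lemma nn_integral_nrm_diff_powr_finite: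
  assumes r: "0 < r" and moment: "(\<integral>\<^sup>+ x. ennreal (nrm x powr r) \<partial>\<mu>) < \<infinity>"
  shows "(\<integral>\<^sup>+ x. ennreal (nrm (x - b) powr r) \<partial>\<mu>) < \<infinity>"
proof -
  have "(\<integral>\<^sup>+ x. ennreal (nrm (x - b) powr r) \<partial>\<mu>)
      \<le> (\<integral>\<^sup>+ x. ennreal (2 powr r) * ennreal (nrm x powr r) + ennreal (2 powr r * nrm b powr r) \<partial>\<mu>)"
  proof (rule nn_integral_mono)
    fix x
    have "nrm (x - b) powr r \<le> (nrm x + nrm b) powr r"
      using triangle[of x "- b"] r by (intro powr_mono2) (auto simp: nonneg minus)
    also have "\<dots> \<le> 2 powr r * nrm x powr r + 2 powr r * nrm b powr r"
      using powr_add_le_two_powr[OF nonneg nonneg r] by (simp add: algebra_simps)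
    finally show "ennreal (nrm (x - b) powr r)
        \<le> ennreal (2 powr r) * ennreal (nrm x powr r) + ennreal (2 powr r * nrm b powr r)"
      by (simp flip: ennreal_mult ennreal_plus)
  qed
  also have "\<dots> = ennreal (2 powr r) * (\<integral>\<^sup>+ x. ennreal (nrm x powr r) \<partial>\<mu>) + ennreal (2 powr r * nrm b powr r)"
    using emeasure_UNIV by (simp add: nn_integral_add nn_integral_cmult)
  also have "\<dots> < \<infinity>"
    using moment by (simp add: ennreal_mult_less_top)
  finally show ?thesis .
qed

lemma distortion_finite:
  assumes "0 < r" "(\<integral>\<^sup>+ x. ennreal (nrm x powr r) \<partial>\<mu>) < \<infinity>" "g \<in> G"
  shows "distortion r G < \<infinity>"
proof -
  have "distortion r G \<le> (\<integral>\<^sup>+ x. ennreal (nrm (x - g) powr r) \<partial>\<mu>)"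
    unfolding distortion_def using assms(3) by (intro nn_integral_mono dist_powr_le)
  also have "\<dots> < \<infinity>" by (rule nn_integral_nrm_diff_powr_finite[OF assms(1,2)])
  finally show ?thesis .
qed

lemma distortion_insert_support_point_gain:
  assumes r: "0 < r" and x0: "x0 \<in> support \<mu>" and \<delta>: "0 < \<delta>"
  obtains c where "0 < c"
    "\<And>G. finite G \<Longrightarrow> \<forall>g\<in>G. \<delta> \<le> nrm (x0 - g) \<Longrightarrow> distortion r (insert x0 G) + c \<le> distortion r G"
proof
  define B where "B = {x. nrm (x - x0) < \<delta> / 4}"
  define \<eta> where "\<eta> = (3 * \<delta> / 4) powr r - (\<delta> / 4) powr r"
  have B: "B \<in> sets \<mu>" unfolding B_def by measurable
  show "0 < ennreal \<eta> * emeasure \<mu> B"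
  proof -
    have "0 < \<eta>" unfolding \<eta>_def using r \<delta> by (simp add: powr_less_mono2)
    moreover have "open B"
      unfolding B_def by (intro open_Collect_less continuous_intros)
    hence "0 < emeasure \<mu> B"
      using x0 \<delta> unfolding support_def B_def by simp
    ultimately show ?thesis by (simp add: ennreal_zero_less_mult_iff)
  qed
  fix G assume G: "finite G" "\<forall>g\<in>G. \<delta> \<le> nrm (x0 - g)"
  have "distortion r (insert x0 G) + ennreal \<eta> * emeasure \<mu> B
      = (\<integral>\<^sup>+ x. dist_powr r (insert x0 G) x + ennreal \<eta> * indicator B x \<partial>\<mu>)"
    unfolding distortion_def using G(1) B by (simp add: nn_integral_add nn_integral_cmult_indicator)
  also have "\<dots> \<le> distortion r G"
    unfolding distortion_def
  proof (rule nn_integral_mono)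
    fix x
    show "dist_powr r (insert x0 G) x + ennreal \<eta> * indicator B x \<le> dist_powr r G x"
    proof (cases "x \<in> B")
      case True
      then show ?thesis unfolding \<eta>_def B_def using dist_powr_insert_near_le[OF r G(2)] by simp
    qed (simp add: dist_powr_antimono subset_insertI)
  qed
  finally show "distortion r (insert x0 G) + ennreal \<eta> * emeasure \<mu> B \<le> distortion r G" .
qed

lemma distortion_insert_support_point_less:
  assumes r: "0 < r" and G: "finite G" "distortion r G < \<infinity>" and x0: "x0 \<in> support \<mu>" "x0 \<notin> G"
  shows "distortion r (insert x0 G) < distortion r G"
proof -
  obtain \<delta> where \<delta>: "0 < \<delta>" "\<forall>g\<in>G. \<delta> \<le> nrm (x0 - g)"
    using avoid_finite_set[OF G(1) x0(2)] by blast
  obtain c where c: "0 < c" "distortion r (insert x0 G) + c \<le> distortion r G"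
    using distortion_insert_support_point_gain[OF r x0(1) \<delta>(1)] G(1) \<delta>(2) by metis
  have "distortion r (insert x0 G) \<noteq> \<infinity>"
    using le_less_trans[OF distortion_antimono[OF subset_insertI] G(2)] by (metis less_irrefl)
  hence "distortion r (insert x0 G) + 0 < distortion r (insert x0 G) + c"
    using c(1) by (simp only: ennreal_add_left_cancel_less) simp
  also have "\<dots> \<le> distortion r G" by (rule c(2))
  finally show ?thesis by simp
qed

lemma AE_in_support: "AE x in \<mu>. x \<in> support \<mu>"
proof -
  define F where "F = {U. open U \<and> emeasure \<mu> U = 0}"
  obtain F' where F': "F' \<subseteq> F" "countable F'" "\<Union>F' = \<Union>F"
    using Lindelof[of F] unfolding F_def by auto
  have "(\<Union>U\<in>F'. U) \<in> null_sets \<mu>"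
    using F' by (intro null_sets_UN') (auto simp: F_def null_sets_def sets_eq_borel)
  moreover have "{x \<in> space \<mu>. x \<notin> support \<mu>} \<subseteq> (\<Union>U\<in>F'. U)"
    using F'(3) by (auto simp: support_def F_def not_less)
  ultimately show ?thesis by (rule AE_I')
qed

lemma nn_integral_le_liminf_distortion_insert:
  assumes "finite G" "\<And>x. (\<lambda>k. dist_powr r (insert (\<xi> k) G) x) \<longlonglongrightarrow> f x"
  shows "(\<integral>\<^sup>+ x. f x \<partial>\<mu>) \<le> liminf (\<lambda>k. distortion r (insert (\<xi> k) G))"
proof -
  have "(\<integral>\<^sup>+ x. f x \<partial>\<mu>) = (\<integral>\<^sup>+ x. liminf (\<lambda>k. dist_powr r (insert (\<xi> k) G) x) \<partial>\<mu>)"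
    using assms(2) by (intro nn_integral_cong lim_imp_Liminf[symmetric]) simp_all
  also have "\<dots> \<le> liminf (\<lambda>k. distortion r (insert (\<xi> k) G))"
    unfolding distortion_def using assms(1) by (intro nn_integral_liminf) measurable
  finally show ?thesis .
qed

lemma distortion_insert_far_gt:
  assumes r: "0 < r" and G: "finite G" "c < distortion r G"
  shows "\<exists>R. \<forall>\<xi>. R \<le> nrm \<xi> \<longrightarrow> c < distortion r (insert \<xi> G)"
proof (rule ccontr)
  assume "\<not> ?thesis"
  hence "\<forall>k::nat. \<exists>\<xi>. real k \<le> nrm \<xi> \<and> distortion r (insert \<xi> G) \<le> c"
    by (auto simp: not_less)
  then obtain \<xi> where \<xi>: "\<And>k. real k \<le> nrm (\<xi> k)" "\<And>k. distortion r (insert (\<xi> k) G) \<le> c"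
    by (metis choice)
  have "filterlim (\<lambda>k. nrm (\<xi> k)) at_top sequentially"
    using \<xi>(1) by (intro filterlim_at_top_mono[OF filterlim_real_sequentially]) auto
  hence "distortion r G \<le> liminf (\<lambda>k. distortion r (insert (\<xi> k) G))"
    using nn_integral_le_liminf_distortion_insert[OF G(1) dist_powr_insert_far_tendsto[OF r]]
    by (simp add: distortion_def)
  also have "\<dots> \<le> c" using \<xi>(2) by (intro Liminf_le) auto
  finally show False using G(2) by simp
qed

lemma distortion_insert_attains_min_on_compact:
  assumes r: "0 < r" and "finite G" "compact K" "K \<noteq> {}"
  obtains l where "l \<in> K" "\<And>\<eta>. \<eta> \<in> K \<Longrightarrow> distortion r (insert l G) \<le> distortion r (insert \<eta> G)"
proof -
  define m where "m = (INF \<xi>\<in>K. distortion r (insert \<xi> G))"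
  obtain u where u: "\<And>n. u n \<in> (\<lambda>\<xi>. distortion r (insert \<xi> G)) ` K" "u \<longlonglongrightarrow> m"
    using Inf_as_limit[of "(\<lambda>\<xi>. distortion r (insert \<xi> G)) ` K"] assms(4) unfolding m_def by blast
  hence "\<forall>n. \<exists>\<xi>. \<xi> \<in> K \<and> u n = distortion r (insert \<xi> G)" by blast
  then obtain \<zeta> where \<zeta>: "\<forall>n. \<zeta> n \<in> K" "\<And>n. u n = distortion r (insert (\<zeta> n) G)"
    using choice[of "\<lambda>n \<xi>. \<xi> \<in> K \<and> u n = distortion r (insert \<xi> G)"] by blast
  obtain l s where ls: "l \<in> K" "strict_mono s" "(\<zeta> \<circ> s) \<longlonglongrightarrow> l"
    using seq_compactE[OF compact_imp_seq_compact[OF assms(3)] \<zeta>(1)] by blast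
  have "(\<lambda>k. distortion r (insert ((\<zeta> \<circ> s) k) G)) \<longlonglongrightarrow> m"
    using LIMSEQ_subseq_LIMSEQ[OF u(2) ls(2)] \<zeta>(2) by (simp add: comp_def)
  hence "liminf (\<lambda>k. distortion r (insert ((\<zeta> \<circ> s) k) G)) = m"
    by (simp add: lim_imp_Liminf)
  hence lm: "distortion r (insert l G) \<le> m"
    using nn_integral_le_liminf_distortion_insert[OF assms(2) dist_powr_insert_tendsto[OF r ls(3)]]
    by (simp add: distortion_def)
  show ?thesis
  proof (rule that[OF ls(1)])
    fix \<eta> assume "\<eta> \<in> K"
    hence "m \<le> distortion r (insert \<eta> G)" unfolding m_def by (rule INF_lower)
    with lm show "distortion r (insert l G) \<le> distortion r (insert \<eta> G)" by (rule order_trans)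
  qed
qed

lemma distortion_insert_argmin_exists:
  assumes r: "0 < r" and G: "finite G" and moment: "(\<integral>\<^sup>+ x. ennreal (nrm x powr r) \<partial>\<mu>) < \<infinity>"
  shows "\<exists>\<xi>. \<forall>\<eta>. distortion r (insert \<xi> G) \<le> distortion r (insert \<eta> G)"
proof (cases "\<exists>\<xi>1. distortion r (insert \<xi>1 G) < distortion r G")
  case True
  then obtain \<xi>1 where \<xi>1: "distortion r (insert \<xi>1 G) < distortion r G" by blast
  obtain R where R: "\<And>\<xi>. R \<le> nrm \<xi> \<Longrightarrow> distortion r (insert \<xi>1 G) < distortion r (insert \<xi> G)"
    using distortion_insert_far_gt[OF r G \<xi>1] by blast
  have "\<not> R \<le> nrm \<xi>1" using R[of \<xi>1] by auto
  hence "\<xi>1 \<in> {x. nrm x \<le> R}" by simp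
  then obtain l where l: "\<And>\<eta>. \<eta> \<in> {x. nrm x \<le> R} \<Longrightarrow> distortion r (insert l G) \<le> distortion r (insert \<eta> G)"
    using distortion_insert_attains_min_on_compact[OF r G compact_sublevel] by blast
  have "distortion r (insert l G) \<le> distortion r (insert \<eta> G)" for \<eta>
  proof (cases "nrm \<eta> \<le> R")
    case False
    hence "distortion r (insert \<xi>1 G) < distortion r (insert \<eta> G)" using R[of \<eta>] by simp
    moreover have "distortion r (insert l G) \<le> distortion r (insert \<xi>1 G)"
      using l \<open>\<xi>1 \<in> _\<close> by simp
    ultimately show ?thesis by simp
  qed (simp add: l)
  thus ?thesis by blast
next
  case False
  hence no_gain: "distortion r G \<le> distortion r (insert \<eta> G)" for \<eta>
    by (simp add: not_less)
  have "G \<noteq> {}"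
  proof
    assume "G = {}"
    thus False using no_gain[of 0] distortion_finite[OF r moment, of 0 "{0}"] by simp
  qed
  then obtain g where "insert g G = G" by blast
  with no_gain show ?thesis by (intro exI[of _ g]) simp
qed

lemma greedy_seq_exists:
  assumes p: "0 < p" and moment: "(\<integral>\<^sup>+ x. ennreal (nrm x powr p) \<partial>\<mu>) < \<infinity>"
  shows "\<exists>a. greedy_seq nrm \<mu> p a"
proof -
  obtain f where f: "\<And>G \<eta>. finite G \<Longrightarrow> distortion p (insert (f G) G) \<le> distortion p (insert \<eta> G)"
    using distortion_insert_argmin_exists[OF p _ moment] choice[of "\<lambda>G \<xi>. finite G \<longrightarrow>
      (\<forall>\<eta>. distortion p (insert \<xi> G) \<le> distortion p (insert \<eta> G))"] by blast
  define pts where "pts n = ((\<lambda>G. insert (f G) G) ^^ n) {}" for n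
  define a where "a n = f (pts (n - 1))" for n
  have "first_pts a N = pts N" for N
    by (induction N) (simp_all add: first_pts_Suc pts_def a_def)
  hence a_Suc: "a (Suc N) = f (first_pts a N)" for N
    by (simp add: a_def)
  have "greedy_seq nrm \<mu> p a"
    unfolding greedy_seq_def
  proof (intro allI)
    fix N \<xi>
    have "distortion p (insert (a (Suc N)) (first_pts a N)) \<le> distortion p (insert \<xi> (first_pts a N))"
      unfolding a_Suc by (rule f) simp
    thus "quant_err nrm \<mu> p (first_pts a N \<union> {a (Suc N)}) \<le> quant_err nrm \<mu> p (first_pts a N \<union> {\<xi>})"
      using p by (simp add: quant_err_eq_distortion enn_powr_le_iff)
  qed
  thus ?thesis by blast
qed

lemma distortion_insert_le_split:
  assumes "finite G" "C \<in> sets borel"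
  shows "distortion r (insert b G)
    \<le> (\<integral>\<^sup>+ x\<in>C. ennreal (nrm (x - b) powr r) \<partial>\<mu>) + (\<integral>\<^sup>+ x\<in>-C. dist_powr r G x \<partial>\<mu>)"
proof -
  note [measurable] = assms(2) borel_measurable_dist_powr[OF assms(1)]
  have "distortion r (insert b G)
      \<le> (\<integral>\<^sup>+ x. ennreal (nrm (x - b) powr r) * indicator C x + dist_powr r G x * indicator (- C) x \<partial>\<mu>)"
    unfolding distortion_def by (intro nn_integral_mono) (simp add: dist_powr_insert split: split_indicator)
  also have "\<dots> = (\<integral>\<^sup>+ x\<in>C. ennreal (nrm (x - b) powr r) \<partial>\<mu>) + (\<integral>\<^sup>+ x\<in>-C. dist_powr r G x \<partial>\<mu>)"
    by (intro nn_integral_add) measurable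
  finally show ?thesis .
qed

lemma distortion_first_pts_split_cell:
  assumes N: "1 \<le> N" and r: "0 \<le> r"
    and C: "C \<in> sets borel" "open_cell nrm a N \<subseteq> C" "C \<subseteq> closed_cell nrm a N"
  shows "distortion r (first_pts a N)
    = (\<integral>\<^sup>+ x\<in>C. ennreal (nrm (x - a N) powr r) \<partial>\<mu>) + (\<integral>\<^sup>+ x\<in>-C. dist_powr r (first_pts a (N - 1)) x \<partial>\<mu>)"
proof -
  note [measurable] = C(1) borel_measurable_dist_powr[OF finite_first_pts]
  have "dist_powr r (first_pts a N) x
      = ennreal (nrm (x - a N) powr r) * indicator C x + dist_powr r (first_pts a (N - 1)) x * indicator (- C) x" for x
    using C dist_powr_first_pts_closed_cell[OF N _ r, of x] dist_powr_first_pts_outside_open_cell[OF N _ r, of x]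
    by (auto split: split_indicator)
  hence "distortion r (first_pts a N)
      = (\<integral>\<^sup>+ x. ennreal (nrm (x - a N) powr r) * indicator C x + dist_powr r (first_pts a (N - 1)) x * indicator (- C) x \<partial>\<mu>)"
    by (simp add: distortion_def)
  also have "\<dots> = (\<integral>\<^sup>+ x\<in>C. ennreal (nrm (x - a N) powr r) \<partial>\<mu>) + (\<integral>\<^sup>+ x\<in>-C. dist_powr r (first_pts a (N - 1)) x \<partial>\<mu>)"
    by (intro nn_integral_add) measurable
  finally show ?thesis .
qed

end

section \<open>Greedy quantization sequences\<close>

locale greedy_quantization = quantization +
  fixes p :: real and a :: "nat \<Rightarrow> 'a"
  assumes p_pos: "0 < p"
    and moment_p: "(\<integral>\<^sup>+ x. ennreal (nrm x powr p) \<partial>\<mu>) < \<infinity>"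
    and greedy: "greedy_seq nrm \<mu> p a"
begin

lemma distortion_first_pts_Suc_le: "distortion p (first_pts a (Suc N)) \<le> distortion p (insert \<xi> (first_pts a N))"
  using greedy p_pos
  by (simp add: greedy_seq_def first_pts_Suc quant_err_eq_distortion enn_powr_le_iff)

lemma first_point_median:
  "(\<integral>\<^sup>+ x. ennreal (nrm (x - a 1) powr p) \<partial>\<mu>) \<le> (\<integral>\<^sup>+ x. ennreal (nrm (x - \<xi>) powr p) \<partial>\<mu>)"
  using distortion_first_pts_Suc_le[of 0 \<xi>]
  by (simp add: distortion_def first_pts_Suc dist_powr_def)

lemma distortion_first_pts_finite: "1 \<le> N \<Longrightarrow> distortion p (first_pts a N) < \<infinity>"
  by (intro distortion_finite[OF p_pos moment_p, of "a 1"]) (simp add: first_pts_def)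

lemma distortion_first_pts_Suc_less:
  assumes N: "le_card N (support \<mu>)" and k: "1 \<le> k" "k < N"
  shows "distortion p (first_pts a (Suc k)) < distortion p (first_pts a k)"
proof -
  have "\<not> support \<mu> \<subseteq> first_pts a k"
  proof
    assume sub: "support \<mu> \<subseteq> first_pts a k"
    hence "N \<le> card (support \<mu>)"
      using N finite_subset[OF sub] by (simp add: le_card_def)
    also have "\<dots> \<le> card (first_pts a k)" using sub by (simp add: card_mono)
    finally show False using card_first_pts_le[of a k] k by linarith
  qed
  then obtain x0 where x0: "x0 \<in> support \<mu>" "x0 \<notin> first_pts a k" by blast
  have "distortion p (first_pts a (Suc k)) \<le> distortion p (insert x0 (first_pts a k))"
    by (rule distortion_first_pts_Suc_le)
  also have "\<dots> < distortion p (first_pts a k)"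
    using k by (intro distortion_insert_support_point_less p_pos x0 distortion_first_pts_finite) simp_all
  finally show ?thesis .
qed

lemma distortion_first_pts_strict_antimono:
  assumes "le_card N (support \<mu>)" "1 \<le> n" "n < m" "m \<le> N"
  shows "distortion p (first_pts a m) < distortion p (first_pts a n)"
proof -
  have "distortion p (first_pts a m) \<le> distortion p (first_pts a (Suc n))"
    using assms by (intro distortion_antimono first_pts_mono) simp
  also have "\<dots> < distortion p (first_pts a n)"
    using assms by (intro distortion_first_pts_Suc_less[OF assms(1)]) auto
  finally show ?thesis .
qed

lemma quant_err_first_pts_strict_antimono:
  "le_card N (support \<mu>) \<Longrightarrow> 1 \<le> n \<Longrightarrow> n < m \<Longrightarrow> m \<le> N
    \<Longrightarrow> quant_err nrm \<mu> p (first_pts a m) < quant_err nrm \<mu> p (first_pts a n)"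
  using p_pos distortion_first_pts_strict_antimono
  by (simp add: quant_err_eq_distortion enn_powr_less_iff)

lemma greedy_point_new:
  assumes "le_card N (support \<mu>)" "n \<in> {1..N}"
  shows "a n \<notin> first_pts a (n - 1)"
proof
  assume "a n \<in> first_pts a (n - 1)"
  hence "first_pts a n = first_pts a (n - 1)"
    using assms(2) by (auto simp: first_pts_pred)
  moreover have "n \<noteq> 1" using \<open>a n \<in> _\<close> by auto
  hence "distortion p (first_pts a n) < distortion p (first_pts a (n - 1))"
    using assms by (intro distortion_first_pts_strict_antimono) auto
  ultimately show False by simp
qed

lemma emeasure_open_cell_pos:
  assumes N: "1 \<le> N" "le_card N (support \<mu>)"
  shows "0 < emeasure \<mu> (open_cell nrm a N)"
proof (cases "N = 1")
  case True
  hence "open_cell nrm a N = UNIV" by (simp add: open_cell_def)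
  thus ?thesis by (simp add: emeasure_UNIV)
next
  case False
  have "distortion p (first_pts a N) < distortion p (first_pts a (N - 1))"
    using N False by (intro distortion_first_pts_strict_antimono[OF N(2)]) auto
  moreover have "distortion p (first_pts a N) = distortion p (first_pts a (N - 1))"
    if "emeasure \<mu> (open_cell nrm a N) = 0"
  proof -
    have "AE x in \<mu>. x \<notin> open_cell nrm a N"
      using that open_open_cell by (intro AE_I'[of "open_cell nrm a N"]) (auto simp: sets_eq_borel)
    hence "AE x in \<mu>. dist_powr p (first_pts a N) x = dist_powr p (first_pts a (N - 1)) x"
      by eventually_elim (rule dist_powr_first_pts_outside_open_cell[OF N(1) _ less_imp_le[OF p_pos]])
    thus ?thesis unfolding distortion_def by (rule nn_integral_cong_AE)
  qed
  ultimately show ?thesis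
    by (cases "emeasure \<mu> (open_cell nrm a N) = 0") (simp_all add: zero_less_iff_neq_zero)
qed

lemma cond_exp_set_cell_le:
  assumes N: "1 \<le> N" and C: "C \<in> sets borel" "open_cell nrm a N \<subseteq> C" "C \<subseteq> closed_cell nrm a N"
  shows "cond_exp_set \<mu> (\<lambda>x. ennreal (nrm (x - a N) powr p)) C
    \<le> cond_exp_set \<mu> (\<lambda>x. ennreal (nrm (x - b) powr p)) C"
proof -
  define R where "R = (\<integral>\<^sup>+ x\<in>-C. dist_powr p (first_pts a (N - 1)) x \<partial>\<mu>)"
  have "R \<noteq> \<infinity>"
  proof (cases "N = 1")
    case True
    hence "- C = {}" using C(2) by (auto simp: open_cell_def)
    thus ?thesis by (simp add: R_def)
  next
    case False
    have "R \<le> distortion p (first_pts a (N - 1))"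
      unfolding R_def distortion_def by (intro nn_integral_mono) (simp split: split_indicator)
    also have "\<dots> < \<infinity>" using N False by (intro distortion_first_pts_finite) simp
    finally show ?thesis by simp
  qed
  have "(\<integral>\<^sup>+ x\<in>C. ennreal (nrm (x - a N) powr p) \<partial>\<mu>) + R = distortion p (first_pts a N)"
    using distortion_first_pts_split_cell[OF N _ C] p_pos by (simp add: R_def)
  also have "\<dots> \<le> distortion p (insert b (first_pts a (N - 1)))"
    using distortion_first_pts_Suc_le[of "N - 1" b] N by simp
  also have "\<dots> \<le> (\<integral>\<^sup>+ x\<in>C. ennreal (nrm (x - b) powr p) \<partial>\<mu>) + R"
    unfolding R_def using C(1) by (intro distortion_insert_le_split) simp_all
  finally have "R + (\<integral>\<^sup>+ x\<in>C. ennreal (nrm (x - a N) powr p) \<partial>\<mu>) \<le> R + (\<integral>\<^sup>+ x\<in>C. ennreal (nrm (x - b) powr p) \<partial>\<mu>)"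
    by (simp add: add.commute)
  hence "(\<integral>\<^sup>+ x\<in>C. ennreal (nrm (x - a N) powr p) \<partial>\<mu>) \<le> (\<integral>\<^sup>+ x\<in>C. ennreal (nrm (x - b) powr p) \<partial>\<mu>)"
    using \<open>R \<noteq> \<infinity>\<close> by (simp add: ennreal_add_left_cancel_le)
  thus ?thesis unfolding cond_exp_set_def divide_ennreal_def by (rule mult_right_mono) simp
qed

lemma greedy_points_approach_support:
  assumes x0: "x0 \<in> support \<mu>" and \<delta>: "0 < \<delta>"
  shows "\<exists>N. \<exists>g\<in>first_pts a N. nrm (x0 - g) < \<delta>"
proof (rule ccontr)
  assume "\<not> ?thesis"
  hence far: "\<forall>g\<in>first_pts a N. \<delta> \<le> nrm (x0 - g)" for N by (auto simp: not_less)
  obtain c where c: "0 < c"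
    "\<And>G. finite G \<Longrightarrow> \<forall>g\<in>G. \<delta> \<le> nrm (x0 - g) \<Longrightarrow> distortion p (insert x0 G) + c \<le> distortion p G"
    using distortion_insert_support_point_gain[OF p_pos x0 \<delta>] by blast
  have step: "distortion p (first_pts a (Suc N)) + c \<le> distortion p (first_pts a N)" for N
    using add_right_mono[OF distortion_first_pts_Suc_le] c(2)[OF finite_first_pts far] by (rule order_trans)
  have bound: "distortion p (first_pts a (Suc n)) + of_nat n * c \<le> distortion p (first_pts a 1)" for n
  proof (induction n)
    case (Suc n)
    have "distortion p (first_pts a (Suc (Suc n))) + of_nat (Suc n) * c
        = (distortion p (first_pts a (Suc (Suc n))) + c) + of_nat n * c"
      by (simp add: algebra_simps)
    also have "\<dots> \<le> distortion p (first_pts a (Suc n)) + of_nat n * c"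
      using step by (rule add_right_mono)
    finally show ?case using Suc.IH by simp
  qed simp
  have "of_nat n * c \<le> distortion p (first_pts a 1)" for n
    using add_increasing[OF zero_le order_refl] bound[of n] by (rule order_trans)
  hence "(SUP n. of_nat n) * c \<le> distortion p (first_pts a 1)"
    by (simp add: SUP_mult_right_ennreal SUP_least)
  hence "\<infinity> \<le> distortion p (first_pts a 1)"
    using c(1) by (simp add: ennreal_SUP_of_nat_eq_top)
  thus False using distortion_first_pts_finite[of 1] by simp
qed

lemma INF_dist_powr_first_pts_eq_0:
  assumes x0: "x0 \<in> support \<mu>" and r: "0 < r"
  shows "(INF N. dist_powr r (first_pts a N) x0) = 0"
proof (rule antisym[OF ennreal_le_epsilon zero_le])
  fix e :: real assume e: "0 < e"
  have "0 < e powr (1 / r)" using e by simp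
  then obtain N g where g: "g \<in> first_pts a N" "nrm (x0 - g) < e powr (1 / r)"
    using greedy_points_approach_support[OF x0] by blast
  have "(INF N. dist_powr r (first_pts a N) x0) \<le> dist_powr r (first_pts a N) x0"
    by (rule INF_lower) simp
  also have "\<dots> \<le> ennreal (nrm (x0 - g) powr r)"
    using g(1) by (rule dist_powr_le)
  also have "\<dots> \<le> ennreal ((e powr (1 / r)) powr r)"
    using g(2) r by (intro ennreal_leI powr_mono2) (auto simp: nonneg)
  also have "\<dots> = ennreal e"
    using e r by (simp add: powr_powr)
  finally show "(INF N. dist_powr r (first_pts a N) x0) \<le> 0 + ennreal e" by simp
qed

lemma distortion_first_pts_tendsto_0:
  assumes q: "0 < q" and moment_q: "(\<integral>\<^sup>+ x. ennreal (nrm x powr q) \<partial>\<mu>) < \<infinity>"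
  shows "(\<lambda>N. distortion q (first_pts a N)) \<longlonglongrightarrow> 0"
proof -
  have dec: "decseq (\<lambda>N. dist_powr q (first_pts a N))"
    by (intro decseq_SucI le_funI dist_powr_antimono first_pts_mono) simp
  have "(INF N. distortion q (first_pts a N)) = (\<integral>\<^sup>+ x. (INF N. dist_powr q (first_pts a N) x) \<partial>\<mu>)"
    using nn_integral_monotone_convergence_INF_decseq[OF dec, of \<mu> 1]
      distortion_finite[OF q moment_q, of "a 1" "first_pts a 1"]
    by (simp add: distortion_def first_pts_def)
  also have "\<dots> = (\<integral>\<^sup>+ x. 0 \<partial>\<mu>)"
    using AE_in_support by (intro nn_integral_cong_AE) (auto elim!: eventually_mono simp: INF_dist_powr_first_pts_eq_0 q)
  finally have "(INF N. distortion q (first_pts a N)) = 0" by simp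
  moreover have "decseq (\<lambda>N. distortion q (first_pts a N))"
    by (intro decseq_SucI distortion_antimono first_pts_mono) simp
  ultimately show ?thesis using LIMSEQ_INF by fastforce
qed

lemma quant_err_first_pts_tendsto_0:
  "0 < q \<Longrightarrow> (\<integral>\<^sup>+ x. ennreal (nrm x powr q) \<partial>\<mu>) < \<infinity> \<Longrightarrow> (\<lambda>N. quant_err nrm \<mu> q (first_pts a N)) \<longlonglongrightarrow> 0"
  by (simp add: quant_err_eq_distortion enn_powr_tendsto_0 distortion_first_pts_tendsto_0)

end


theorem proposition2p1:
  fixes nrm :: "'a::euclidean_space \<Rightarrow> real"
    and \<mu> :: "'a measure"
    and p :: real
  assumes norm: "is_norm nrm"
    and prob: "prob_space \<mu>"
    and borel: "sets \<mu> = sets borel"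
    and p_pos: "0 < p"
    and mom_p: "(\<integral>\<^sup>+ x. ennreal (nrm x powr p) \<partial>\<mu>) < \<infinity>"
  shows
    \<comment> \<open>(a) existence\<close>
    "(\<exists>a. greedy_seq nrm \<mu> p a)
     \<and> (\<forall>a. greedy_seq nrm \<mu> p a \<longrightarrow>
          (\<forall>\<xi>. (\<integral>\<^sup>+ x. ennreal (nrm (x - a 1) powr p) \<partial>\<mu>) \<le> (\<integral>\<^sup>+ x. ennreal (nrm (x - \<xi>) powr p) \<partial>\<mu>)))
     \<and> (\<forall>a N. greedy_seq nrm \<mu> p a \<longrightarrow> le_card N (support \<mu>) \<longrightarrow>
          (\<forall>n m. 1 \<le> n \<longrightarrow> n < m \<longrightarrow> m \<le> N \<longrightarrow>
              quant_err nrm \<mu> p (first_pts a m) < quant_err nrm \<mu> p (first_pts a n))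
          \<and> (\<forall>n\<in>{1..N}. a n \<notin> first_pts a (n - 1)))
     \<comment> \<open>(b) local optimality\<close>
     \<and> (\<forall>a N. greedy_seq nrm \<mu> p a \<longrightarrow> 1 \<le> N \<longrightarrow> le_card N (support \<mu>) \<longrightarrow>
          emeasure \<mu> (open_cell nrm a N) > 0
          \<and> (\<forall>C. C \<in> sets borel \<longrightarrow> open_cell nrm a N \<subseteq> C \<longrightarrow> C \<subseteq> closed_cell nrm a N \<longrightarrow>
               (\<forall>b. cond_exp_set \<mu> (\<lambda>x. ennreal (nrm (x - a N) powr p)) C
                    \<le> cond_exp_set \<mu> (\<lambda>x. ennreal (nrm (x - b) powr p)) C)))
     \<comment> \<open>(c) space filling\<close>
     \<and> (\<forall>q a. p \<le> q \<longrightarrow> (\<integral>\<^sup>+ x. ennreal (nrm x powr q) \<partial>\<mu>) < \<infinity> \<longrightarrow> greedy_seq nrm \<mu> p a \<longrightarrow>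
          ((\<lambda>N. quant_err nrm \<mu> q (first_pts a N)) \<longlonglongrightarrow> 0)
          \<and> ((\<lambda>N. \<integral>\<^sup>+ \<xi>. (INF i\<in>{1..N}. ennreal (nrm (\<xi> - a i) powr q)) \<partial>\<mu>) \<longlonglongrightarrow> 0)
          \<and> ((\<lambda>N. quant_err nrm \<mu> p (first_pts a N)) \<longlonglongrightarrow> 0))"
proof -
  interpret quantization nrm \<mu>
    using norm prob borel by (simp add: quantization_def quantization_axioms_def norm_function_def)
  have greedy: "greedy_quantization nrm \<mu> p a" if "greedy_seq nrm \<mu> p a" for a
    using that p_pos mom_p by (simp add: greedy_quantization_def greedy_quantization_axioms_def quantization_axioms)
  show ?thesis
  proof (intro conjI allI impI ballI)
    show "\<exists>a. greedy_seq nrm \<mu> p a" by (rule greedy_seq_exists[OF p_pos mom_p])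
  next
    fix q a assume "p \<le> q" "(\<integral>\<^sup>+ x. ennreal (nrm x powr q) \<partial>\<mu>) < \<infinity>" "greedy_seq nrm \<mu> p a"
    with p_pos mom_p show
      "(\<lambda>N. quant_err nrm \<mu> q (first_pts a N)) \<longlonglongrightarrow> 0"
      "(\<lambda>N. \<integral>\<^sup>+ \<xi>. (INF i\<in>{1..N}. ennreal (nrm (\<xi> - a i) powr q)) \<partial>\<mu>) \<longlonglongrightarrow> 0"
      "(\<lambda>N. quant_err nrm \<mu> p (first_pts a N)) \<longlonglongrightarrow> 0"
      using greedy_quantization.quant_err_first_pts_tendsto_0[OF greedy]
        greedy_quantization.distortion_first_pts_tendsto_0[OF greedy]
      by (simp_all add: distortion_def dist_powr_first_pts)
  qed (use greedy_quantization.first_point_median[OF greedy]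
        greedy_quantization.quant_err_first_pts_strict_antimono[OF greedy]
        greedy_quantization.greedy_point_new[OF greedy]
        greedy_quantization.emeasure_open_cell_pos[OF greedy]
        greedy_quantization.cond_exp_set_cell_le[OF greedy] in blast)+
qed

end
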